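(* Assume $\alpha=\beta\ge1$ and choose $p>0$ with $\alpha-1\le p\le\max\{\alpha/2,\alpha-1\}$. Let $\mathbf U$ with multiplier $\Lambda$ be the similarity profile and let $\mathbf u$ be a solution of the scaled system with $E_p(\tau):=\mathcal E_p(\mathbf u(\tau)|\mathbf U)$ and $E_p(0)<\infty$. Then for all $\tau>0$, $$\frac{\mathrm d}{\mathrm d\tau}E_p(\tau)\le-\Big(\frac12-\tilde\mu_{p,\alpha}e^{-\tau}\Big)E_p(\tau)+\tilde K_{p,\alpha}e^{-\tau},$$ where: if $2\le\alpha=p+1$, then $\tilde\mu_{\alpha-1,\alpha}=0$ and $\tilde K_{\alpha-1,\alpha}=\frac1{4k}\int_{\mathbb R}\frac{\Lambda^2}{U^\alpha}\mathrm dy$; if $1\le\alpha<2$, then with $\kappa=\sqrt{1+p-\alpha}$, $\tilde\mu_{p,\alpha}=\frac{\kappa}{k}\widehat M_{p,\alpha}\big\|\frac{\Lambda^2}{U^{\alpha+1}}\big\|_{L^\infty}$ and $\tilde K_{p,\alpha}=\frac1k\widehat M_{p,\alpha}\big(\kappa F_p^*(\kappa)+1\big)\int_{\mathbb R}\frac{\Lambda^2}{U^\alpha}\mathrm dy$.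
   Context: Fix $d_1,d_2,k>0$, real stoichiometric coefficients $\alpha,\beta\ge1$ and $A_-,A_+>0$. The similarity profile is a triple $(U,V,\Lambda)$ with $U,V\in\mathrm C^2(\mathbb R)$ positive, bounded and bounded away from $0$, $\Lambda:\mathbb R\to\mathbb R$, satisfying $d_1U''+\tfrac y2U'+\alpha\Lambda=0$, $d_2V''+\tfrac y2V'-\beta\Lambda=0$, $U^\alpha=V^\beta$ on $\mathbb R$, and $U(\pm\infty)=A_\pm^\beta$, $V(\pm\infty)=A_\pm^\alpha$. The scaled system is $u_\tau=d_1u_{yy}+\tfrac y2u_y+e^\tau\alpha k(v^\beta-u^\alpha)$, $v_\tau=d_2v_{yy}+\tfrac y2v_y-e^\tau\beta k(v^\beta-u^\alpha)$ for $\tau>0$, $y\in\mathbb R$, with $(u,v)(\tau,\pm\infty)=(A_\pm^\beta,A_\pm^\alpha)$. A "solution" is a positive classical solution for which the relative entropy is finite and differentiable in $\tau$ with differentiation under the integral allowed, all integrals appearing are finite, and integrations by parts over $\mathbb R$ produce no boundary terms ($\rho,\zeta\to1$ at $\pm\infty$ with sufficient decay). Relative densities $\rho=u/U$, $\zeta=v/V$. Entropy functions: $F_p(z)=\frac{1}{p(p-1)}(z^p-pz+p-1)$ for $p\notin\{0,1\}$, $F_1(z)=z\log z-z+1$; $F_p^*$ its Legendre transform. Relative entropy $\mathcal E_p(\mathbf u|\mathbf U)=\int_{\mathbb R}\big(UF_p(\rho)+VF_p(\zeta)\big)\mathrm dy$. For $\alpha>0,p>0$, $\Phi_{p,\alpha}(z)=\frac{\alpha}{p-1}\big((z+1)^{(p-1)/p}-1\big)\big((z+1)^{\alpha/p}-1\big)$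 for $z>-1$ ($p\ne1$; for $p=1$ its limit $\alpha\log(z+1)((z+1)^\alpha-1)$), $+\infty$ for $z\le-1$, and $\widehat M_{p,\alpha}:=\sup_{z\ne0}\frac{\alpha^2}{4p^2}\frac{z^2}{\Phi_{p,\alpha}(z)}$. $\|\cdot\|_{L^\infty}$ is the supremum of the absolute value. *)

theory Defs
  imports "HOL-Analysis.Analysis"
begin

definition Fent :: "real \<Rightarrow> real \<Rightarrow> real" where
  "Fent p z = (if p = 1 then z * ln z - z + 1
               else (z powr p - p * z + p - 1) / (p * (p - 1)))"

definition dFent :: "real \<Rightarrow> real \<Rightarrow> real" where
  "dFent p z = (if p = 1 then ln z else (z powr (p - 1) - 1) / (p - 1))"

definition ddFent :: "real \<Rightarrow> real \<Rightarrow> real" where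
  "ddFent p z = z powr (p - 2)"

text \<open>Legendre transform of F_p (F_p is defined on [0,\<infinity>)).\<close>
definition Fstar :: "real \<Rightarrow> real \<Rightarrow> real" where
  "Fstar p s = Sup ((\<lambda>z. s * z - Fent p z) ` {0..})"

text \<open>Phi_{p,alpha}(z) for z > -1 (it is +\<infinity> for z \<le> -1).\<close>
definition Phi :: "real \<Rightarrow> real \<Rightarrow> real \<Rightarrow> real" where
  "Phi p a z = (if p = 1 then a * ln (z + 1) * ((z + 1) powr a - 1)
                else a / (p - 1) * ((z + 1) powr ((p - 1) / p) - 1) * ((z + 1) powr (a / p) - 1))"

text \<open>M-hat = sup over z \<noteq> 0 of a^2/(4p^2) * z^2 / Phi(z); for z \<le> -1 the quotient
  is z^2/(+\<infinity>) = 0.\<close>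
definition Mhat :: "real \<Rightarrow> real \<Rightarrow> real" where
  "Mhat p a = Sup ((\<lambda>z. if z \<le> -1 then 0 else a^2 / (4 * p^2) * z^2 / Phi p a z) ` (UNIV - {0}))"

definition Linf :: "(real \<Rightarrow> real) \<Rightarrow> real" where
  "Linf f = Sup (range (\<lambda>y. \<bar>f y\<bar>))"

definition dtau :: "(real \<Rightarrow> real \<Rightarrow> real) \<Rightarrow> real \<Rightarrow> real \<Rightarrow> real" where
  "dtau w t y = deriv (\<lambda>s. w s y) t"

definition dy :: "(real \<Rightarrow> real \<Rightarrow> real) \<Rightarrow> real \<Rightarrow> real \<Rightarrow> real" where
  "dy w t y = deriv (w t) y"

definition dyy :: "(real \<Rightarrow> real \<Rightarrow> real) \<Rightarrow> real \<Rightarrow> real \<Rightarrow> real" where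
  "dyy w t y = deriv (\<lambda>z. deriv (w t) z) y"

definition sim_profile ::
  "real \<Rightarrow> real \<Rightarrow> real \<Rightarrow> real \<Rightarrow> real \<Rightarrow> real \<Rightarrow>
   (real \<Rightarrow> real) \<Rightarrow> (real \<Rightarrow> real) \<Rightarrow> (real \<Rightarrow> real) \<Rightarrow> bool" where
  "sim_profile d1 d2 \<alpha> \<beta> Am Ap U V \<Lambda> \<longleftrightarrow>
     (\<forall>y. U y > 0 \<and> V y > 0) \<and>
     bounded (range U) \<and> bounded (range V) \<and>
     (\<exists>c>0. \<forall>y. c \<le> U y \<and> c \<le> V y) \<and>
     (\<forall>y. U differentiable at y \<and> deriv U differentiable at y \<and>
          V differentiable at y \<and> deriv V differentiable at y) \<and>
     continuous_on UNIV (deriv (deriv U)) \<and> continuous_on UNIV (deriv (deriv V)) \<and>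
     (\<forall>y. d1 * deriv (deriv U) y + y / 2 * deriv U y + \<alpha> * \<Lambda> y = 0) \<and>
     (\<forall>y. d2 * deriv (deriv V) y + y / 2 * deriv V y - \<beta> * \<Lambda> y = 0) \<and>
     (\<forall>y. U y powr \<alpha> = V y powr \<beta>) \<and>
     (U \<longlongrightarrow> Am powr \<beta>) at_bot \<and> (U \<longlongrightarrow> Ap powr \<beta>) at_top \<and>
     (V \<longlongrightarrow> Am powr \<alpha>) at_bot \<and> (V \<longlongrightarrow> Ap powr \<alpha>) at_top"

definition scaled_solution ::
  "real \<Rightarrow> real \<Rightarrow> real \<Rightarrow> real \<Rightarrow> real \<Rightarrow> real \<Rightarrow> real \<Rightarrow>
   (real \<Rightarrow> real \<Rightarrow> real) \<Rightarrow> (real \<Rightarrow> real \<Rightarrow> real) \<Rightarrow> bool" where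
  "scaled_solution d1 d2 k \<alpha> \<beta> Am Ap u v \<longleftrightarrow>
     (\<forall>t\<ge>0. \<forall>y. u t y > 0 \<and> v t y > 0) \<and>
     continuous_on ({0..} \<times> UNIV) (\<lambda>(t, y). u t y) \<and>
     continuous_on ({0..} \<times> UNIV) (\<lambda>(t, y). v t y) \<and>
     (\<forall>t>0. \<forall>y. (\<lambda>s. u s y) differentiable at t \<and> u t differentiable at y \<and>
                 deriv (u t) differentiable at y \<and>
                 (\<lambda>s. v s y) differentiable at t \<and> v t differentiable at y \<and>
                 deriv (v t) differentiable at y) \<and>
     continuous_on ({0<..} \<times> UNIV) (\<lambda>(t, y). dtau u t y) \<and>
     continuous_on ({0<..} \<times> UNIV) (\<lambda>(t, y). dy u t y) \<and>
     continuous_on ({0<..} \<times> UNIV) (\<lambda>(t, y). dyy u t y) \<and>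
     continuous_on ({0<..} \<times> UNIV) (\<lambda>(t, y). dtau v t y) \<and>
     continuous_on ({0<..} \<times> UNIV) (\<lambda>(t, y). dy v t y) \<and>
     continuous_on ({0<..} \<times> UNIV) (\<lambda>(t, y). dyy v t y) \<and>
     (\<forall>t>0. \<forall>y. dtau u t y = d1 * dyy u t y + y / 2 * dy u t y
                   + exp t * \<alpha> * k * (v t y powr \<beta> - u t y powr \<alpha>)) \<and>
     (\<forall>t>0. \<forall>y. dtau v t y = d2 * dyy v t y + y / 2 * dy v t y
                   - exp t * \<beta> * k * (v t y powr \<beta> - u t y powr \<alpha>)) \<and>
     (\<forall>t>0. (u t \<longlongrightarrow> Am powr \<beta>) at_bot \<and> (u t \<longlongrightarrow> Ap powr \<beta>) at_top \<and>
            (v t \<longlongrightarrow> Am powr \<alpha>) at_bot \<and> (v t \<longlongrightarrow> Ap powr \<alpha>) at_top)"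

definition rdens :: "(real \<Rightarrow> real \<Rightarrow> real) \<Rightarrow> (real \<Rightarrow> real) \<Rightarrow> real \<Rightarrow> real \<Rightarrow> real" where
  "rdens w W t y = w t y / W y"

definition entropy_density ::
  "real \<Rightarrow> (real \<Rightarrow> real) \<Rightarrow> (real \<Rightarrow> real) \<Rightarrow>
   (real \<Rightarrow> real \<Rightarrow> real) \<Rightarrow> (real \<Rightarrow> real \<Rightarrow> real) \<Rightarrow> real \<Rightarrow> real \<Rightarrow> real" where
  "entropy_density p U V u v t y =
     U y * Fent p (rdens u U t y) + V y * Fent p (rdens v V t y)"

definition relent ::
  "real \<Rightarrow> (real \<Rightarrow> real) \<Rightarrow> (real \<Rightarrow> real) \<Rightarrow>
   (real \<Rightarrow> real \<Rightarrow> real) \<Rightarrow> (real \<Rightarrow> real \<Rightarrow> real) \<Rightarrow> real \<Rightarrow> real" where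
  "relent p U V u v t = integral UNIV (entropy_density p U V u v t)"

text \<open>For one component (w, W, diffusion d) at time t: the integrals appearing when
  the entropy dissipation is computed are finite, and the two integrations by parts
  over the real line produce no boundary terms.\<close>
definition component_regular ::
  "real \<Rightarrow> real \<Rightarrow> (real \<Rightarrow> real) \<Rightarrow> (real \<Rightarrow> real) \<Rightarrow>
   (real \<Rightarrow> real \<Rightarrow> real) \<Rightarrow> real \<Rightarrow> bool" where
  "component_regular p d W \<Lambda> w t \<longleftrightarrow>
     (\<lambda>y. ddFent p (rdens w W t y) * W y * (dy (rdens w W) t y)^2) integrable_on UNIV \<and>
     (\<lambda>y. dFent p (rdens w W t y) * deriv (\<lambda>z. W z * dy (rdens w W) t z) y) integrable_on UNIV \<and>
     (\<lambda>y. dFent p (rdens w W t y) * (d * deriv W y + y / 2 * W y) * dy (rdens w W) t y)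
        integrable_on UNIV \<and>
     (\<lambda>y. Fent p (rdens w W t y) * \<Lambda> y) integrable_on UNIV \<and>
     (\<lambda>y. \<Lambda> y * rdens w W t y * dFent p (rdens w W t y)) integrable_on UNIV \<and>
     ((\<lambda>y. dFent p (rdens w W t y) * W y * dy (rdens w W) t y) \<longlongrightarrow> 0) at_top \<and>
     ((\<lambda>y. dFent p (rdens w W t y) * W y * dy (rdens w W) t y) \<longlongrightarrow> 0) at_bot \<and>
     ((\<lambda>y. Fent p (rdens w W t y) * (d * deriv W y + y / 2 * W y)) \<longlongrightarrow> 0) at_top \<and>
     ((\<lambda>y. Fent p (rdens w W t y) * (d * deriv W y + y / 2 * W y)) \<longlongrightarrow> 0) at_bot"

definition entropy_regular ::
  "real \<Rightarrow> real \<Rightarrow> real \<Rightarrow> real \<Rightarrow> real \<Rightarrow>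
   (real \<Rightarrow> real) \<Rightarrow> (real \<Rightarrow> real) \<Rightarrow> (real \<Rightarrow> real) \<Rightarrow>
   (real \<Rightarrow> real \<Rightarrow> real) \<Rightarrow> (real \<Rightarrow> real \<Rightarrow> real) \<Rightarrow> bool" where
  "entropy_regular p d1 d2 \<alpha> \<beta> U V \<Lambda> u v \<longleftrightarrow>
     \<comment> \<open>relative entropy finite for all tau \<ge> 0 (in particular E_p(0) < \<infinity>)\<close>
     (\<forall>t\<ge>0. entropy_density p U V u v t integrable_on UNIV) \<and>
     \<comment> \<open>differentiable, with differentiation under the integral sign\<close>
     (\<forall>t>0. (\<lambda>y. dFent p (rdens u U t y) * dtau u t y + dFent p (rdens v V t y) * dtau v t y)
               integrable_on UNIV \<and>
            (relent p U V u v has_real_derivative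
               integral UNIV (\<lambda>y. dFent p (rdens u U t y) * dtau u t y
                                 + dFent p (rdens v V t y) * dtau v t y)) (at t)) \<and>
     \<comment> \<open>the remaining integrals are finite, no boundary terms\<close>
     (\<forall>t>0. component_regular p d1 U \<Lambda> u t \<and> component_regular p d2 V \<Lambda> v t \<and>
            (\<lambda>y. (v t y powr \<beta> - u t y powr \<alpha>) * dFent p (rdens u U t y)) integrable_on UNIV \<and>
            (\<lambda>y. (v t y powr \<beta> - u t y powr \<alpha>) * dFent p (rdens v V t y)) integrable_on UNIV)"

end

theory Submission
  imports Defs
begin

text \<open>Since \<open>\<alpha> = \<beta>\<close> the profile satisfies \<open>V = U\<close>. Differentiating the relative entropy
  under the integral and integrating the diffusion terms by parts (the boundary terms vanish)
  gives \<open>E\<^sub>p' = - D - E\<^sub>p/2 + \<integral> R\<close>, where \<open>D \<ge> 0\<close> by convexity of \<open>F\<^sub>p\<close> and \<open>R\<close> collects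
  the \<open>\<Lambda>\<close>-terms of the profile equations and the reaction term at the relative densities
  \<open>a = \<rho>\<close>, \<open>b = \<zeta>\<close>. Then \<open>R\<close> is estimated pointwise by Young's inequality, the reaction
  term absorbing the \<open>\<Lambda>\<close>-term. For \<open>\<alpha> = p + 1\<close> this uses the Cauchy--Schwarz inequality
  \<open>((b\<^sup>p - a\<^sup>p)/p)\<^sup>2 \<le> (b\<^sup>\<alpha> - a\<^sup>\<alpha>)/\<alpha> \<cdot> (F\<^sub>p'(b) - F\<^sub>p'(a))\<close> and leaves
  \<open>e\<^sup>-\<^sup>\<tau> \<Lambda>\<^sup>2/(4 k U\<^sup>\<alpha>)\<close>. For \<open>\<alpha> < 2\<close> the absorption is measured by \<open>z\<^sup>2/\<Phi>(z)\<close>,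
  \<open>z = (b/a)\<^sup>p - 1\<close>, hence by \<open>M\<^sub>p\<^sub>,\<^sub>\<alpha>\<close>, and leaves a factor \<open>a\<^sup>1\<^sup>+\<^sup>p\<^sup>-\<^sup>\<alpha>\<close>, which
  Bernoulli's and the Fenchel--Young inequality bound by \<open>\<kappa> F\<^sub>p(a) + \<kappa> F\<^sub>p\<^sup>*(\<kappa>) + 1\<close>.\<close>

lemma powr_le_affine:
  fixes x r :: real
  assumes "x > 0" and "0 \<le> r" and "r \<le> 1"
  shows "x powr r \<le> 1 + r * (x - 1)"
  using Youngs_inequality_0[of r "1 - r" x 1] assms by (simp add: algebra_simps)

lemma affine_le_powr:
  fixes x r :: real
  assumes x: "x > 0" and r: "r \<ge> 1 \<or> r \<le> 0"
  shows "1 + r * (x - 1) \<le> x powr r"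
  using r
proof
  assume r: "r \<ge> 1"
  have "x = (x powr r) powr (1 / r)"
    using x r by (simp add: powr_powr)
  also have "\<dots> \<le> 1 + 1 / r * (x powr r - 1)"
    using powr_le_affine[of "x powr r" "1 / r"] x r by simp
  finally show ?thesis
    using r by (simp add: field_simps)
next
  assume r: "r \<le> 0"
  have "x powr (- r / (1 - r)) * (x powr r) powr (1 / (1 - r))
          \<le> - r / (1 - r) * x + 1 / (1 - r) * x powr r"
    by (rule Youngs_inequality_0) (use x r in \<open>auto simp: field_simps\<close>)
  moreover have "x powr (- r / (1 - r)) * (x powr r) powr (1 / (1 - r)) = 1"
    using x r by (simp add: powr_powr flip: powr_add)
  moreover have "- r / (1 - r) * x + 1 / (1 - r) * x powr r = (- r * x + x powr r) / (1 - r)"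
    by (simp add: add_divide_distrib diff_divide_distrib)
  ultimately have "1 - r \<le> - r * x + x powr r"
    using r by (simp add: pos_le_divide_eq)
  then show ?thesis
    by (simp add: algebra_simps)
qed

lemma mult_le_square_plus:
  fixes m L X :: real
  assumes "m > 0"
  shows "L * X \<le> m * X\<^sup>2 + L\<^sup>2 / (4 * m)"
proof -
  have "m * X\<^sup>2 + L\<^sup>2 / (4 * m) - L * X = (2 * m * X - L)\<^sup>2 / (4 * m)"
    using assms by (simp add: field_simps power2_eq_square)
  then show ?thesis
    using assms by (smt (verit) divide_nonneg_pos zero_le_power2)
qed

lemma Fent_has_real_derivative:
  fixes p z :: real
  assumes z: "z > 0" and p: "p > 0"
  shows "(Fent p has_real_derivative dFent p z) (at z)"
proof (cases "p = 1")
  case True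
  have "Fent p = (\<lambda>z. z * ln z - z + 1)"
    using True by (auto simp: Fent_def fun_eq_iff)
  moreover have "dFent p z = ln z + z * (1 / z) - 1"
    using True z by (simp add: dFent_def)
  ultimately show ?thesis
    using z by (auto intro!: derivative_eq_intros)
next
  case False
  have "Fent p = (\<lambda>z. (z powr p - p * z + p - 1) / (p * (p - 1)))"
    using False by (auto simp: Fent_def fun_eq_iff)
  moreover have "(p * z powr (p - 1) - p * 1) / (p * (p - 1)) = dFent p z"
    using False p by (auto simp: dFent_def field_simps)
  ultimately show ?thesis
    using z False p by (auto intro!: derivative_eq_intros)
qed

lemma dFent_has_real_derivative:
  fixes p z :: real
  assumes z: "z > 0"
  shows "(dFent p has_real_derivative ddFent p z) (at z)"
proof (cases "p = 1")
  case True
  have "dFent p = ln"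
    using True by (auto simp: dFent_def fun_eq_iff)
  moreover have "ddFent p z = 1 / z"
    using True z by (simp add: ddFent_def powr_minus field_simps)
  ultimately show ?thesis
    using z by (auto intro!: derivative_eq_intros)
next
  case False
  have "dFent p = (\<lambda>z. (z powr (p - 1) - 1) / (p - 1))"
    using False by (auto simp: dFent_def fun_eq_iff)
  moreover have "((p - 1) * z powr (p - 1 - 1) - 0) / (p - 1) = ddFent p z"
    using False by (auto simp: ddFent_def field_simps)
  ultimately show ?thesis
    using z False by (auto intro!: derivative_eq_intros)
qed

lemma Fent_minus_mult_dFent:
  fixes p z :: real
  assumes z: "z > 0" and p: "p > 0"
  shows "Fent p z - z * dFent p z = (1 - z powr p) / p"
proof (cases "p = 1")
  case False
  have "z * z powr (p - 1) = z powr p"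
    using z by (simp add: powr_diff)
  then have "Fent p z - z * dFent p z
      = (z powr p - p * z + p - 1) / (p * (p - 1)) - (z powr p - z) / (p - 1)"
    using False by (simp add: Fent_def dFent_def right_diff_distrib)
  also have "\<dots> = ((z powr p - p * z + p - 1) - p * (z powr p - z)) / (p * (p - 1))"
    using False p by (simp add: diff_divide_distrib)
  also have "\<dots> = ((1 - z powr p) * (p - 1)) / (p * (p - 1))"
    by (simp add: algebra_simps)
  also have "\<dots> = (1 - z powr p) / p"
    using False by simp
  finally show ?thesis .
qed (use z in \<open>simp add: Fent_def dFent_def\<close>)

lemma Fent_nonneg:
  fixes p z :: real
  assumes z: "z > 0" and p: "p > 0"
  shows "Fent p z \<ge> 0"
proof -
  consider "p = 1" | "p > 1" | "p < 1" by linarith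
  then show ?thesis
  proof cases
    case 1
    have "ln (1 / z) \<le> 1 / z - 1"
      using z by (intro ln_le_minus_one) auto
    then have "z * (- ln z) \<le> z * (1 / z - 1)"
      using z by (intro mult_left_mono) (auto simp: ln_div)
    then show ?thesis
      using 1 z by (simp add: Fent_def algebra_simps)
  next
    case 2
    have "1 + p * (z - 1) \<le> z powr p"
      using z 2 by (intro affine_le_powr) auto
    then show ?thesis
      using 2 by (auto simp: Fent_def algebra_simps intro!: divide_nonneg_pos)
  next
    case 3
    have "z powr p \<le> 1 + p * (z - 1)"
      using z 3 p by (intro powr_le_affine) auto
    moreover have "p * (p - 1) < 0"
      using 3 p by (simp add: mult_pos_neg)
    ultimately show ?thesis
      using 3 by (auto simp: Fent_def algebra_simps intro!: divide_nonpos_neg)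
  qed
qed

text \<open>Cauchy--Schwarz for \<open>\<integral>\<^sub>a\<^sup>b x\<^sup>p\<^sup>-\<^sup>1 = \<integral>\<^sub>a\<^sup>b x\<^sup>p\<^sup>/\<^sup>2 x\<^sup>p\<^sup>/\<^sup>2\<^sup>-\<^sup>1\<close>: first the AM-GM form with
  an arbitrary weight \<open>l\<close>, which holds because the difference of the two sides is a primitive
  of \<open>x\<^sup>p\<^sup>-\<^sup>2 (l x - 1)\<^sup>2 / (2 l) \<ge> 0\<close>, then the optimal choice of \<open>l\<close>.\<close>

lemma powr_diff_le_weighted_mean:
  fixes p a b l :: real
  assumes p: "p > 0" and a: "a > 0" and ab: "a \<le> b" and l: "l > 0"
  shows "(b powr p - a powr p) / p
         \<le> (l * ((b powr (p + 1) - a powr (p + 1)) / (p + 1)) + (dFent p b - dFent p a) / l) / 2"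
proof -
  define h where "h = (\<lambda>x. (l * (x powr (p + 1) / (p + 1)) + dFent p x / l) / 2 - x powr p / p)"
  have "h a \<le> h b"
  proof (rule DERIV_nonneg_imp_nondecreasing[OF ab])
    fix x
    assume "a \<le> x" "x \<le> b"
    then have x: "x > 0"
      using a by simp
    have d1: "((\<lambda>x. x powr (p + 1) / (p + 1)) has_real_derivative x powr p) (at x)"
      using DERIV_cdivide[OF has_real_derivative_powr[OF x, of "p + 1"], of "p + 1"] p by simp
    have d2: "((\<lambda>x. x powr p / p) has_real_derivative x powr (p - 1)) (at x)"
      using DERIV_cdivide[OF has_real_derivative_powr[OF x, of p], of p] p by simp
    have "(h has_real_derivative (l * x powr p + ddFent p x / l) / 2 - x powr (p - 1)) (at x)"
      unfolding h_def
      by (intro DERIV_diff DERIV_cdivide DERIV_add DERIV_cmult d1 d2 dFent_has_real_derivative x)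
    moreover have "(l * x powr p + ddFent p x / l) / 2 - x powr (p - 1) = x powr (p - 2) * (l * x - 1)\<^sup>2 / (2 * l)"
    proof -
      have "x powr p = x powr (p - 2) * x powr 2"
        by (simp flip: powr_add)
      then have e1: "x powr p = x powr (p - 2) * x\<^sup>2"
        using x by (simp add: powr_numeral)
      have e2: "x powr (p - 1) = x powr (p - 2) * x"
        using x e1 by (simp add: powr_diff power2_eq_square)
      from e1 e2 show ?thesis
        using l by (simp add: ddFent_def field_simps power2_eq_square)
    qed
    moreover have "x powr (p - 2) * (l * x - 1)\<^sup>2 / (2 * l) \<ge> 0"
      using l x by simp
    ultimately show "\<exists>y. (h has_real_derivative y) (at x) \<and> 0 \<le> y"
      by auto
  qed
  then show ?thesis
    unfolding h_def by (simp add: diff_divide_distrib add_divide_distrib algebra_simps)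
qed

lemma powr_diff_square_le:
  fixes p a b :: real
  assumes p: "p > 0" and a: "a > 0" and b: "b > 0"
  shows "((b powr p - a powr p) / p)\<^sup>2
         \<le> ((b powr (p + 1) - a powr (p + 1)) / (p + 1)) * (dFent p b - dFent p a)"
proof -
  have ordered: "((y powr p - x powr p) / p)\<^sup>2
      \<le> ((y powr (p + 1) - x powr (p + 1)) / (p + 1)) * (dFent p y - dFent p x)"
    if x: "x > 0" and xy: "x < y" for x y
  proof -
    define I1 where "I1 = (y powr p - x powr p) / p"
    define I2 where "I2 = (y powr (p + 1) - x powr (p + 1)) / (p + 1)"
    define I0 where "I0 = dFent p y - dFent p x"
    have I1: "I1 > 0" and I2: "I2 > 0"
      unfolding I1_def I2_def using x xy p by (simp_all add: powr_less_mono2)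
    have "I1 \<le> ((I1 / I2) * I2 + I0 / (I1 / I2)) / 2"
      using powr_diff_le_weighted_mean[OF p x less_imp_le[OF xy], of "I1 / I2"] I1 I2
      unfolding I1_def[symmetric] I2_def[symmetric] I0_def[symmetric] by simp
    then have "I1 \<le> I0 * I2 / I1"
      using I2 by simp
    then have "I1 * I1 \<le> I2 * I0"
      using I1 by (simp add: pos_le_divide_eq mult.commute)
    then show ?thesis
      unfolding I1_def I2_def I0_def by (simp add: power2_eq_square)
  qed
  consider "a < b" | "a = b" | "b < a"
    by linarith
  then show ?thesis
  proof cases
    case 3
    then have "((a powr p - b powr p) / p)\<^sup>2
        \<le> ((a powr (p + 1) - b powr (p + 1)) / (p + 1)) * (dFent p a - dFent p b)"
      using ordered[OF b] by simp
    moreover have "((a powr p - b powr p) / p)\<^sup>2 = ((b powr p - a powr p) / p)\<^sup>2"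
      by (simp add: power2_commute diff_divide_distrib)
    ultimately show ?thesis
      by (simp add: diff_divide_distrib algebra_simps)
  qed (use ordered[OF a] in simp_all)
qed

lemma bdd_above_Fstar_values:
  fixes p s :: real
  assumes p: "0 < p" "p < 1" and s: "s \<le> 1"
  shows "bdd_above ((\<lambda>z. s * z - Fent p z) ` {0..})"
proof -
  define c where "c = p powr (1 / (1 - p))"
  have c: "c > 0" "c powr (1 - p) = p"
    using p by (simp_all add: c_def powr_powr)
  have powr_le: "z powr p \<le> c powr (- p) + p * p * z" if z: "z \<ge> 0" for z
  proof (cases "z = 0")
    case False
    then have "(c * z) powr p \<le> 1 + p * (c * z - 1)"
      using z c p by (intro powr_le_affine) auto
    then have "z powr p \<le> (1 + p * (c * z - 1)) / c powr p"
      using z c by (simp add: powr_mult field_simps)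
    also have "\<dots> \<le> (1 + p * c * z) / c powr p"
      using p c by (intro divide_right_mono) (auto simp: algebra_simps)
    also have "\<dots> = c powr (- p) + p * c powr (1 - p) * z"
      using c by (simp add: powr_minus powr_diff field_simps)
    finally show ?thesis
      using c by simp
  qed (use c in simp)
  have "s * z - Fent p z \<le> (c powr (- p) + p - 1) / (p * (1 - p))" if z: "z \<ge> 0" for z
  proof -
    have pp: "p * (1 - p) > 0"
      using p by simp
    have "- Fent p z = (z powr p - p * z + p - 1) / (p * (1 - p))"
      using p by (simp add: Fent_def field_simps less_imp_neq)
    also have "\<dots> \<le> (c powr (- p) + p * p * z - p * z + p - 1) / (p * (1 - p))"
      using powr_le[OF z] pp by (intro divide_right_mono) auto
    also have "c powr (- p) + p * p * z - p * z + p - 1 = (c powr (- p) + p - 1) - z * (p * (1 - p))"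
      by (simp add: algebra_simps)
    also have "((c powr (- p) + p - 1) - z * (p * (1 - p))) / (p * (1 - p))
        = (c powr (- p) + p - 1) / (p * (1 - p)) - z"
      using p by (simp add: diff_divide_distrib)
    finally show ?thesis
      using s z mult_right_mono[of s 1 z] by simp
  qed
  then show ?thesis
    unfolding bdd_above_def by auto
qed

lemma powr_le_Fent_Fstar:
  fixes p \<alpha> a :: real
  assumes p: "0 < p" "p < 1" and \<alpha>: "\<alpha> - 1 \<le> p" "p \<le> \<alpha>" and a: "a > 0"
  shows "a powr (1 + p - \<alpha>)
    \<le> sqrt (1 + p - \<alpha>) * Fent p a + sqrt (1 + p - \<alpha>) * Fstar p (sqrt (1 + p - \<alpha>)) + 1"
proof -
  define q where "q = 1 + p - \<alpha>"
  define \<kappa> where "\<kappa> = sqrt q"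
  have q: "0 \<le> q" "q \<le> 1"
    using \<alpha> by (auto simp: q_def)
  have \<kappa>: "0 \<le> \<kappa>" "\<kappa> \<le> 1" "\<kappa> * \<kappa> = q"
    using q by (auto simp: \<kappa>_def)
  have "\<kappa> * a - Fent p a \<le> Fstar p \<kappa>"
    unfolding Fstar_def by (rule cSUP_upper[OF _ bdd_above_Fstar_values[OF p \<kappa>(2)]]) (use a in auto)
  have "a powr q \<le> 1 + q * (a - 1)"
    using a q by (intro powr_le_affine) auto
  also have "\<dots> \<le> 1 + q * a"
    using q by (simp add: algebra_simps)
  also have "\<dots> = 1 + \<kappa> * (\<kappa> * a)"
    using \<kappa>(3) by (simp add: mult.assoc[symmetric])
  also have "\<dots> \<le> 1 + \<kappa> * (Fent p a + Fstar p \<kappa>)"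
    using \<kappa> \<open>\<kappa> * a - Fent p a \<le> Fstar p \<kappa>\<close> by (intro add_left_mono mult_left_mono) auto
  finally show ?thesis
    by (simp add: q_def[symmetric] \<kappa>_def[symmetric] algebra_simps)
qed

section \<open>The function \<open>\<Phi>\<close> and the constant \<open>M\<close>\<close>

text \<open>With \<open>s = (1 - p)/p\<close> and \<open>w = z + 1\<close>, \<open>\<Phi>\<^sub>p\<^sub>,\<^sub>a(z) = a/(1 - p) \<cdot> (1 - w\<^sup>-\<^sup>s)(w\<^sup>a\<^sup>/\<^sup>p - 1)\<close>.\<close>

lemma square_le_powr_factors_below_one:
  fixes s A w :: real
  assumes s: "s > 0" and A: "A \<ge> 1" and w: "0 < w" "w \<le> 1"
  shows "s * (w - 1)\<^sup>2 \<le> (1 - w powr (- s)) * (w powr A - 1)"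
proof -
  have "1 + (- s) * (w - 1) \<le> w powr (- s)"
    using w s by (intro affine_le_powr) auto
  then have "- (s * (w - 1)) \<le> - (1 - w powr (- s))"
    by (simp add: algebra_simps)
  moreover have "w powr A \<le> w powr 1"
    using w A by (intro powr_mono') auto
  then have "- (w - 1) \<le> - (w powr A - 1)"
    using w by simp
  moreover have "1 \<le> w powr (- s)"
    using w s powr_le1[of s w] by (simp add: powr_minus one_le_inverse)
  ultimately have "(- (s * (w - 1))) * (- (w - 1)) \<le> (- (1 - w powr (- s))) * (- (w powr A - 1))"
    using w s by (intro mult_mono) (auto simp: mult_le_0_iff)
  then show ?thesis
    by (simp add: power2_eq_square algebra_simps)
qed

lemma square_le_powr_factors_near_one:
  fixes s A w :: real
  assumes s: "s > 0" and A: "A \<ge> 1" and w: "1 \<le> w" "w \<le> 2"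
  shows "s / (2 * 2 powr s) * (w - 1)\<^sup>2 \<le> (1 - w powr (- s)) * (w powr A - 1)"
proof -
  have ws: "0 < w powr s" "w powr s \<le> 2 powr s"
    using w s by (auto intro: powr_mono2)
  have "1 + s * (w - 1) / w \<le> w powr s"
    using affine_le_powr[of "1 / w" "- s"] w s by (simp add: powr_divide powr_minus_divide field_simps)
  then have "s * (w - 1) / w / w powr s \<le> (w powr s - 1) / w powr s"
    using ws by (intro divide_right_mono) auto
  moreover have "s * (w - 1) / (2 * 2 powr s) \<le> s * (w - 1) / (w * w powr s)"
    using w s ws by (intro divide_left_mono mult_mono) auto
  moreover have "(w powr s - 1) / w powr s = 1 - w powr (- s)"
    using ws by (simp add: powr_minus field_simps)
  ultimately have "s / (2 * 2 powr s) * (w - 1) \<le> 1 - w powr (- s)"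
    by simp
  moreover have "1 + A * (w - 1) \<le> w powr A"
    using w A by (intro affine_le_powr) auto
  then have "w - 1 \<le> w powr A - 1"
    using w A by (smt (verit) mult_le_cancel_right1)
  moreover have "w powr (- s) \<le> 1"
    using w s ge_one_powr_ge_zero[of w s] by (simp add: powr_minus inverse_le_1_iff)
  ultimately have "(s / (2 * 2 powr s) * (w - 1)) * (w - 1) \<le> (1 - w powr (- s)) * (w powr A - 1)"
    using w s by (intro mult_mono) auto
  then show ?thesis
    by (simp add: power2_eq_square mult.assoc)
qed

lemma square_le_powr_factors_large:
  fixes s A w :: real
  assumes s: "s > 0" and A: "A \<ge> 2" and w: "w \<ge> 2"
  shows "(1 - 2 powr (- s)) * (w - 1)\<^sup>2 \<le> (1 - w powr (- s)) * (w powr A - 1)"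
proof -
  have "w powr (- s) \<le> 2 powr (- s)"
    using w s by (intro powr_mono2') auto
  moreover have "2 powr (- s) \<le> 1"
    using s ge_one_powr_ge_zero[of 2 s] by (simp add: powr_minus inverse_le_1_iff)
  moreover have "w powr 2 \<le> w powr A"
    using w A by (intro powr_mono) auto
  then have "(w - 1)\<^sup>2 \<le> w powr A - 1"
    using w by (simp add: powr_numeral power2_eq_square algebra_simps)
  ultimately show ?thesis
    by (intro mult_mono) auto
qed

lemma square_le_powr_factors:
  fixes s A :: real
  assumes s: "s > 0" and A: "A \<ge> 2"
  obtains c where "c > 0" and "\<And>w. w > 0 \<Longrightarrow> c * (w - 1)\<^sup>2 \<le> (1 - w powr (- s)) * (w powr A - 1)"
proof
  define c where "c = min (s / (2 * 2 powr s)) (1 - 2 powr (- s))"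
  have "2 powr (- s) < 2 powr 0"
    using s by (intro powr_less_mono) auto
  then show "c > 0"
    using s by (simp add: c_def)
  have "s / (2 * 2 powr s) \<le> s"
    using s ge_one_powr_ge_zero[of 2 s] by (simp add: divide_le_eq)
  fix w :: real
  assume w: "w > 0"
  consider "w \<le> 1" | "1 \<le> w" "w \<le> 2" | "w \<ge> 2"
    by linarith
  then show "c * (w - 1)\<^sup>2 \<le> (1 - w powr (- s)) * (w powr A - 1)"
  proof cases
    case 1
    have "c * (w - 1)\<^sup>2 \<le> s * (w - 1)\<^sup>2"
      using \<open>s / (2 * 2 powr s) \<le> s\<close> by (intro mult_right_mono) (auto simp: c_def)
    also have "\<dots> \<le> (1 - w powr (- s)) * (w powr A - 1)"
      using square_le_powr_factors_below_one[OF s _ w 1] A by simp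
    finally show ?thesis .
  next
    case 2
    have "c * (w - 1)\<^sup>2 \<le> s / (2 * 2 powr s) * (w - 1)\<^sup>2"
      by (intro mult_right_mono) (auto simp: c_def)
    also have "\<dots> \<le> (1 - w powr (- s)) * (w powr A - 1)"
      using square_le_powr_factors_near_one[OF s _ 2] A by simp
    finally show ?thesis .
  next
    case 3
    have "c * (w - 1)\<^sup>2 \<le> (1 - 2 powr (- s)) * (w - 1)\<^sup>2"
      by (intro mult_right_mono) (auto simp: c_def)
    also have "\<dots> \<le> (1 - w powr (- s)) * (w powr A - 1)"
      using square_le_powr_factors_large[OF s A 3] .
    finally show ?thesis .
  qed
qed

lemma Phi_ge_square:
  fixes p a :: real
  assumes p: "0 < p" "p < 1" and a: "2 * p \<le> a"
  obtains K where "K > 0" and "\<And>z. z > -1 \<Longrightarrow> K * z\<^sup>2 \<le> Phi p a z"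
proof -
  define s where "s = (1 - p) / p"
  have s: "s > 0"
    using p by (simp add: s_def)
  have A: "a / p \<ge> 2"
    using a p by (simp add: field_simps)
  obtain c where c: "c > 0"
    and factors: "\<And>w. w > 0 \<Longrightarrow> c * (w - 1)\<^sup>2 \<le> (1 - w powr (- s)) * (w powr (a / p) - 1)"
    using square_le_powr_factors[OF s A] by blast
  show ?thesis
  proof
    show "a / (1 - p) * c > 0"
      using p a c by simp
    fix z :: real
    assume z: "z > -1"
    have "(p - 1) / p = - s"
      by (simp add: s_def minus_divide_left)
    moreover have "a / (p - 1) * (X - 1) * Y = a / (1 - p) * ((1 - X) * Y)" for X Y
      using p by (simp add: field_simps)
    ultimately have "Phi p a z = a / (1 - p) * ((1 - (z + 1) powr (- s)) * ((z + 1) powr (a / p) - 1))"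
      using p by (simp add: Phi_def)
    moreover have "a / (1 - p) * (c * ((z + 1) - 1)\<^sup>2) \<le> a / (1 - p) * ((1 - (z + 1) powr (- s)) * ((z + 1) powr (a / p) - 1))"
      using factors[of "z + 1"] z p a by (intro mult_left_mono) auto
    ultimately show "a / (1 - p) * c * z\<^sup>2 \<le> Phi p a z"
      by (simp add: mult.assoc)
  qed
qed

lemma Phi_pos:
  fixes p a z :: real
  assumes "0 < p" "p < 1" "2 * p \<le> a" "z > -1" "z \<noteq> 0"
  shows "Phi p a z > 0"
proof -
  obtain K where "K > 0" "K * z\<^sup>2 \<le> Phi p a z"
    using Phi_ge_square[OF assms(1-3)] assms(4) by metis
  moreover have "K * z\<^sup>2 > 0"
    using \<open>K > 0\<close> assms(5) by simp
  ultimately show ?thesis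
    by linarith
qed

lemma bdd_above_Mhat_quotients:
  fixes p a :: real
  assumes p: "0 < p" "p < 1" and a: "2 * p \<le> a"
  shows "bdd_above ((\<lambda>z. if z \<le> -1 then 0 else a\<^sup>2 / (4 * p\<^sup>2) * z\<^sup>2 / Phi p a z) ` (UNIV - {0}))"
proof -
  obtain K where K: "K > 0" "\<And>z. z > -1 \<Longrightarrow> K * z\<^sup>2 \<le> Phi p a z"
    using Phi_ge_square[OF p a] by metis
  have "a\<^sup>2 / (4 * p\<^sup>2) * z\<^sup>2 / Phi p a z \<le> a\<^sup>2 / (4 * p\<^sup>2) / K" if "z > -1" "z \<noteq> 0" for z
  proof -
    have "z\<^sup>2 / Phi p a z \<le> z\<^sup>2 / (K * z\<^sup>2)"
      using K that Phi_pos[OF p a that] by (intro divide_left_mono) auto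
    also have "\<dots> = 1 / K"
      using that by simp
    finally have "a\<^sup>2 / (4 * p\<^sup>2) * (z\<^sup>2 / Phi p a z) \<le> a\<^sup>2 / (4 * p\<^sup>2) * (1 / K)"
      by (intro mult_left_mono) auto
    then show ?thesis
      by simp
  qed
  moreover have "0 \<le> a\<^sup>2 / (4 * p\<^sup>2) / K"
    using K by simp
  ultimately show ?thesis
    unfolding bdd_above_def by (intro exI[of _ "a\<^sup>2 / (4 * p\<^sup>2) / K"]) (auto simp: not_le)
qed

lemma Mhat_ge:
  fixes p a z :: real
  assumes "0 < p" "p < 1" "2 * p \<le> a" "z > -1" "z \<noteq> 0"
  shows "a\<^sup>2 / (4 * p\<^sup>2) * z\<^sup>2 / Phi p a z \<le> Mhat p a"
proof -
  have "(\<lambda>z. if z \<le> -1 then 0 else a\<^sup>2 / (4 * p\<^sup>2) * z\<^sup>2 / Phi p a z) z \<le> Mhat p a"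
    unfolding Mhat_def by (rule cSUP_upper[OF _ bdd_above_Mhat_quotients[OF assms(1-3)]]) (use assms in auto)
  then show ?thesis
    using assms by simp
qed

lemma Mhat_nonneg:
  fixes p a :: real
  assumes "0 < p" "p < 1" "2 * p \<le> a"
  shows "Mhat p a \<ge> 0"
proof -
  have "(\<lambda>z. if z \<le> -1 then 0 else a\<^sup>2 / (4 * p\<^sup>2) * z\<^sup>2 / Phi p a z) (-2) \<le> Mhat p a"
    unfolding Mhat_def by (rule cSUP_upper[OF _ bdd_above_Mhat_quotients[OF assms]]) auto
  then show ?thesis
    by simp
qed

section \<open>Entropy flux and integration by parts\<close>

text \<open>The flux whose derivative is the diffusive part of the entropy dissipation of a component
  \<open>w\<close> with profile \<open>W\<close>; the no-boundary-term hypotheses of \<open>component_regular\<close> say that it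
  vanishes at \<open>\<plusminus>\<infinity>\<close>.\<close>

definition entropy_flux :: "real \<Rightarrow> real \<Rightarrow> (real \<Rightarrow> real) \<Rightarrow> (real \<Rightarrow> real) \<Rightarrow> real \<Rightarrow> real" where
  "entropy_flux p d W w y =
     d * dFent p (w y / W y) * W y * deriv (\<lambda>y. w y / W y) y
     + Fent p (w y / W y) * (d * deriv W y + y / 2 * W y)"

definition entropy_flux_deriv ::
  "real \<Rightarrow> real \<Rightarrow> real \<Rightarrow> (real \<Rightarrow> real) \<Rightarrow> (real \<Rightarrow> real) \<Rightarrow> (real \<Rightarrow> real) \<Rightarrow> real \<Rightarrow> real" where
  "entropy_flux_deriv p d c W \<Lambda> w y =
     dFent p (w y / W y) * (d * deriv (deriv w) y + y / 2 * deriv w y)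
     + d * ddFent p (w y / W y) * W y * (deriv (\<lambda>y. w y / W y) y)\<^sup>2
     + 1 / 2 * W y * Fent p (w y / W y)
     - c * \<Lambda> y * ((1 - (w y / W y) powr p) / p)"

lemma quotient_has_real_derivative:
  fixes w W :: "real \<Rightarrow> real"
  assumes "\<And>y. w differentiable at y" "\<And>y. W differentiable at y" "\<And>y. W y \<noteq> 0"
  shows "((\<lambda>y. w y / W y) has_real_derivative
      (deriv w y * W y - w y * deriv W y) / (W y)\<^sup>2) (at y)"
  using assms
  by (auto intro!: derivative_eq_intros simp: DERIV_deriv_iff_real_differentiable power2_eq_square)

lemma entropy_flux_eq:
  fixes w W :: "real \<Rightarrow> real"
  assumes "\<And>y. w differentiable at y" "\<And>y. W differentiable at y" "\<And>y. W y > 0"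
  shows "entropy_flux p d W w = (\<lambda>y. d * dFent p (w y / W y) * (deriv w y - w y * deriv W y / W y)
    + Fent p (w y / W y) * (d * deriv W y + y / 2 * W y))"
proof -
  have "W y * deriv (\<lambda>y. w y / W y) y = deriv w y - w y * deriv W y / W y" for y
    using DERIV_imp_deriv[OF quotient_has_real_derivative[OF assms(1,2)]] assms(3)
    by (simp add: less_imp_neq[symmetric] field_simps power2_eq_square)
  then show ?thesis
    by (simp add: fun_eq_iff entropy_flux_def mult.assoc)
qed

text \<open>The hypothesis on \<open>W\<close> is the profile equation, with \<open>c = \<alpha>\<close> for \<open>U\<close> and \<open>c = -\<beta>\<close> for \<open>V\<close>.\<close>

lemma entropy_flux_has_real_derivative:
  fixes d c p y :: real and w W \<Lambda> :: "real \<Rightarrow> real"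
  assumes wpos: "\<And>y. w y > 0" and Wpos: "\<And>y. W y > 0"
    and wd: "\<And>y. w differentiable at y" "\<And>y. deriv w differentiable at y"
    and Wd: "\<And>y. W differentiable at y" "\<And>y. deriv W differentiable at y"
    and W_eq: "\<And>y. c * \<Lambda> y = - (d * deriv (deriv W) y + y / 2 * deriv W y)"
    and p: "p > 0"
  shows "(entropy_flux p d W w has_real_derivative entropy_flux_deriv p d c W \<Lambda> w y) (at y)"
proof -
  define w1 where "w1 = deriv w"
  define w2 where "w2 = deriv w1"
  define W1 where "W1 = deriv W"
  define W2 where "W2 = deriv W1"
  define \<rho> where "\<rho> = (\<lambda>y. w y / W y)"
  define \<rho>1 where "\<rho>1 = (\<lambda>y. (w1 y * W y - w y * W1 y) / (W y)\<^sup>2)"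
  define Q where "Q = (\<lambda>y. w1 y - w y * W1 y / W y)"
  define Q1 where "Q1 = (\<lambda>y. w2 y - ((w1 y * W1 y + w y * W2 y) * W y - w y * W1 y * W1 y) / (W y)\<^sup>2)"
  have Dw: "\<And>y. (w has_real_derivative w1 y) (at y)"
    and Dw1: "\<And>y. (w1 has_real_derivative w2 y) (at y)"
    and DW: "\<And>y. (W has_real_derivative W1 y) (at y)"
    and DW1: "\<And>y. (W1 has_real_derivative W2 y) (at y)"
    unfolding w1_def w2_def W1_def W2_def using wd Wd DERIV_deriv_iff_real_differentiable by blast+
  have Wnz: "\<And>y. W y \<noteq> 0"
    using Wpos less_imp_neq by metis
  have Drho: "\<And>y. (\<rho> has_real_derivative \<rho>1 y) (at y)"
    unfolding \<rho>_def \<rho>1_def w1_def W1_def using quotient_has_real_derivative[OF wd(1) Wd(1) Wnz] .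
  have rho_pos: "\<And>y. \<rho> y > 0"
    unfolding \<rho>_def using wpos Wpos by simp
  have DQ: "(Q has_real_derivative Q1 y) (at y)"
    unfolding Q_def Q1_def
    by (rule derivative_eq_intros Dw DW Dw1 DW1 refl | simp add: Wnz power2_eq_square)+
  have "entropy_flux p d W w = (\<lambda>y. d * dFent p (\<rho> y) * Q y + Fent p (\<rho> y) * (d * W1 y + y / 2 * W y))"
    using entropy_flux_eq[OF wd(1) Wd(1) Wpos] by (simp add: \<rho>_def Q_def W1_def w1_def)
  then have D: "(entropy_flux p d W w has_real_derivative
     d * (ddFent p (\<rho> y) * \<rho>1 y) * Q y + d * dFent p (\<rho> y) * Q1 y
     + (dFent p (\<rho> y) * \<rho>1 y * (d * W1 y + y / 2 * W y)
        + Fent p (\<rho> y) * (d * W2 y + (1 / 2 * W y + y / 2 * W1 y)))) (at y)"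
    by (simp only:)
       (rule derivative_eq_intros DERIV_chain2[OF dFent_has_real_derivative[OF rho_pos] Drho]
        DERIV_chain2[OF Fent_has_real_derivative[OF rho_pos p] Drho] DQ DW DW1 refl | simp)+
  have chain: "d * Q1 y + \<rho>1 y * (d * W1 y + y / 2 * W y) + \<rho> y * (d * W2 y + y / 2 * W1 y)
      = d * w2 y + y / 2 * w1 y"
    unfolding Q1_def \<rho>1_def \<rho>_def using Wnz[of y] by (simp add: field_simps power2_eq_square)
  have QW: "Q y = W y * \<rho>1 y"
    using Wnz[of y] by (simp add: Q_def \<rho>1_def field_simps power2_eq_square)
  have "c * \<Lambda> y * ((1 - \<rho> y powr p) / p)
      = - (d * W2 y + y / 2 * W1 y) * (Fent p (\<rho> y) - \<rho> y * dFent p (\<rho> y))"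
    using W_eq Fent_minus_mult_dFent[OF rho_pos p] by (simp add: W1_def W2_def)
  then have "d * (ddFent p (\<rho> y) * \<rho>1 y) * Q y + d * dFent p (\<rho> y) * Q1 y
     + (dFent p (\<rho> y) * \<rho>1 y * (d * W1 y + y / 2 * W y)
        + Fent p (\<rho> y) * (d * W2 y + (1 / 2 * W y + y / 2 * W1 y)))
     = dFent p (\<rho> y) * (d * w2 y + y / 2 * w1 y) + d * ddFent p (\<rho> y) * W y * (\<rho>1 y)\<^sup>2
       + 1 / 2 * W y * Fent p (\<rho> y) - c * \<Lambda> y * ((1 - \<rho> y powr p) / p)"
    unfolding QW chain[symmetric] by (simp add: algebra_simps power2_eq_square)
  moreover have "deriv (\<lambda>y. w y / W y) = \<rho>1"
    using Drho DERIV_imp_deriv unfolding \<rho>_def by blast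
  ultimately show ?thesis
    using D by (simp add: entropy_flux_deriv_def \<rho>_def w1_def w2_def)
qed

lemma entropy_flux_tendsto_zero:
  assumes "component_regular p d W \<Lambda> w t"
  shows "(entropy_flux p d W (w t) \<longlongrightarrow> 0) at_top"
    and "(entropy_flux p d W (w t) \<longlongrightarrow> 0) at_bot"
proof -
  have r: "rdens w W t = (\<lambda>y. w t y / W y)"
    by (auto simp: rdens_def fun_eq_iff)
  note c = assms[unfolded component_regular_def dy_def r]
  have e: "entropy_flux p d W (w t) = (\<lambda>y. d * (dFent p (w t y / W y) * W y * deriv (\<lambda>y. w t y / W y) y)
            + Fent p (w t y / W y) * (d * deriv W y + y / 2 * W y))"
    by (simp add: fun_eq_iff entropy_flux_def mult.assoc)
  show "(entropy_flux p d W (w t) \<longlongrightarrow> 0) at_top" "(entropy_flux p d W (w t) \<longlongrightarrow> 0) at_bot"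
    unfolding e using tendsto_add[OF tendsto_mult_right_zero[of _ _ d]] c by auto
qed

lemma integral_symmetric_interval_tendsto:
  fixes f :: "real \<Rightarrow> real"
  assumes "f integrable_on UNIV"
  shows "(\<lambda>n. integral {- real n..real n} f) \<longlonglongrightarrow> integral UNIV f"
proof (rule LIMSEQ_I)
  fix e :: real
  assume "e > 0"
  have "(f has_integral integral UNIV f) UNIV"
    using assms by (simp add: has_integral_integral)
  then obtain B
    where "B > 0" and B: "\<And>a b. ball 0 B \<subseteq> cbox a b \<Longrightarrow> norm (integral (cbox a b) f - integral UNIV f) < e"
    using \<open>e > 0\<close> unfolding has_integral_alt'[of f _ UNIV] by auto
  obtain N :: nat where "B \<le> real N"
    using real_arch_simple by blast
  show "\<exists>N. \<forall>n\<ge>N. norm (integral {- real n..real n} f - integral UNIV f) < e"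
  proof (intro exI[of _ N] allI impI)
    fix n
    assume "N \<le> n"
    with \<open>B \<le> real N\<close> have "ball 0 B \<subseteq> cbox (- real n) (real n)"
      by (auto simp: dist_real_def)
    then show "norm (integral {- real n..real n} f - integral UNIV f) < e"
      using B by simp
  qed
qed

text \<open>The integrations by parts of the entropy method: \<open>H\<close> is the flux, and its limits at
  \<open>\<plusminus>\<infinity>\<close> remove the boundary terms.\<close>

lemma integral_le_of_derivative_bound:
  fixes D e L H H' :: "real \<Rightarrow> real" and K1 K2 :: real
  assumes iD: "D integrable_on UNIV" and ie: "e integrable_on UNIV" and iL: "L integrable_on UNIV"
    and dH: "\<And>y. (H has_real_derivative H' y) (at y)"
    and bound: "\<And>y. D y \<le> H' y - K1 * e y + K2 * L y"
    and H_top: "(H \<longlongrightarrow> 0) at_top" and H_bot: "(H \<longlongrightarrow> 0) at_bot"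
  shows "integral UNIV D \<le> - K1 * integral UNIV e + K2 * integral UNIV L"
proof -
  have finite_interval: "integral {a..b} D \<le> (H b - H a) - K1 * integral {a..b} e + K2 * integral {a..b} L"
    if ab: "a \<le> b" for a b
  proof -
    have "(H' has_integral (H b - H a)) {a..b}"
      by (rule fundamental_theorem_of_calculus[OF ab])
         (use dH in \<open>auto simp: has_real_derivative_iff_has_vector_derivative intro: has_vector_derivative_at_within\<close>)
    moreover have "e integrable_on {a..b}" "L integrable_on {a..b}"
      using ie iL by (auto intro: integrable_on_subinterval)
    ultimately have R: "((\<lambda>y. H' y - K1 * e y + K2 * L y) has_integral
        ((H b - H a) - K1 * integral {a..b} e + K2 * integral {a..b} L)) {a..b}"
      by (intro has_integral_add has_integral_diff has_integral_mult_right integrable_integral)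
    have "D integrable_on {a..b}"
      using iD by (rule integrable_on_subinterval) auto
    then have "integral {a..b} D \<le> integral {a..b} (\<lambda>y. H' y - K1 * e y + K2 * L y)"
      using R bound by (intro integral_le) (auto simp: has_integral_integrable)
    also have "\<dots> = (H b - H a) - K1 * integral {a..b} e + K2 * integral {a..b} L"
      using R by (rule integral_unique)
    finally show ?thesis .
  qed
  have "(\<lambda>n. H (real n)) \<longlonglongrightarrow> 0"
    using filterlim_compose[OF H_top filterlim_real_sequentially] .
  moreover have "(\<lambda>n. H (- real n)) \<longlonglongrightarrow> 0"
    using filterlim_compose[OF H_bot] filterlim_real_sequentially filterlim_uminus_at_top by blast
  ultimately have "(\<lambda>n. (H (real n) - H (- real n)) - K1 * integral {- real n..real n} e
        + K2 * integral {- real n..real n} L)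
      \<longlonglongrightarrow> (0 - 0) - K1 * integral UNIV e + K2 * integral UNIV L"
    by (intro tendsto_intros integral_symmetric_interval_tendsto ie iL)
  then show ?thesis
    using LIMSEQ_le[OF integral_symmetric_interval_tendsto[OF iD]] finite_interval by auto
qed

section \<open>The reaction term\<close>

text \<open>What remains of the pointwise entropy dissipation besides diffusion: the \<open>\<Lambda>\<close>-terms of
  the profile equations plus the reaction, at relative densities \<open>a = \<rho>\<close>, \<open>b = \<zeta>\<close>, with
  \<open>L = \<Lambda>(y)\<close> and \<open>W = U(y) = V(y)\<close>.\<close>

definition reaction_term :: "real \<Rightarrow> real \<Rightarrow> real \<Rightarrow> real \<Rightarrow> real \<Rightarrow> real \<Rightarrow> real \<Rightarrow> real \<Rightarrow> real" where
  "reaction_term p \<alpha> k t L W a b =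
     \<alpha> / p * L * (b powr p - a powr p)
     + exp t * \<alpha> * k * ((W * b) powr \<alpha> - (W * a) powr \<alpha>) * (dFent p a - dFent p b)"

lemma reaction_term_le_critical:
  fixes p \<alpha> k t L W a b :: real
  assumes \<alpha>: "\<alpha> = p + 1" and p: "p > 0" and k: "k > 0" and W: "W > 0" and a: "a > 0" and b: "b > 0"
  shows "reaction_term p \<alpha> k t L W a b \<le> exp (- t) * L\<^sup>2 / (4 * k * W powr \<alpha>)"
proof -
  define m where "m = exp t * k * W powr \<alpha>"
  define X where "X = \<alpha> * ((b powr p - a powr p) / p)"
  have m: "m > 0"
    unfolding m_def using k W by simp
  have "m * X\<^sup>2 = m * \<alpha>\<^sup>2 * ((b powr p - a powr p) / p)\<^sup>2"
    unfolding X_def by (simp only: power_mult_distrib mult.assoc)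
  also have "\<dots> \<le> m * \<alpha>\<^sup>2 * (((b powr \<alpha> - a powr \<alpha>) / \<alpha>) * (dFent p b - dFent p a))"
    using powr_diff_square_le[OF p a b] \<alpha> m by (intro mult_left_mono) auto
  also have "\<dots> = m * \<alpha> * (b powr \<alpha> - a powr \<alpha>) * (dFent p b - dFent p a)"
    using \<alpha> p by (simp add: power2_eq_square field_simps)
  finally have "m * X\<^sup>2 \<le> m * \<alpha> * (b powr \<alpha> - a powr \<alpha>) * (dFent p b - dFent p a)" .
  moreover have "reaction_term p \<alpha> k t L W a b = L * X - m * \<alpha> * (b powr \<alpha> - a powr \<alpha>) * (dFent p b - dFent p a)"
    using W a b by (simp add: reaction_term_def X_def m_def powr_mult diff_divide_distrib algebra_simps)
  moreover have "exp (- t) * L\<^sup>2 / (4 * k * W powr \<alpha>) = L\<^sup>2 / (4 * m)"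
    by (simp add: m_def exp_minus field_simps)
  ultimately show ?thesis
    using mult_le_square_plus[OF m, of L X] by linarith
qed

text \<open>For \<open>p \<noteq> 1\<close> the reaction term is a function of \<open>z = (b/a)\<^sup>p - 1\<close>, with \<open>\<Phi>\<close> as its
  dissipative part.\<close>

lemma reaction_term_eq_Phi:
  fixes p \<alpha> k t L W a b :: real
  assumes p: "p > 0" "p \<noteq> 1" and W: "W > 0" and a: "a > 0" and b: "b > 0"
  shows "reaction_term p \<alpha> k t L W a b
    = \<alpha> / p * L * (a powr p * ((b / a) powr p - 1))
      - exp t * k * W powr \<alpha> * (a powr \<alpha> * a powr (p - 1)) * Phi p \<alpha> ((b / a) powr p - 1)"
proof -
  define r where "r = b / a"
  have r: "r > 0" and b_eq: "b = a * r"
    using a b by (auto simp: r_def)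
  have "(r powr p) powr ((p - 1) / p) = r powr (p - 1)" "(r powr p) powr (\<alpha> / p) = r powr \<alpha>"
    using r p by (simp_all add: powr_powr)
  then have Phi_eq: "Phi p \<alpha> (r powr p - 1) = \<alpha> / (p - 1) * (r powr (p - 1) - 1) * (r powr \<alpha> - 1)"
    using p by (simp add: Phi_def)
  have "(W * b) powr \<alpha> - (W * a) powr \<alpha> = W powr \<alpha> * a powr \<alpha> * (r powr \<alpha> - 1)"
    unfolding b_eq using W a r by (simp add: powr_mult algebra_simps)
  moreover have "dFent p a - dFent p b = a powr (p - 1) * (1 - r powr (p - 1)) / (p - 1)"
    unfolding b_eq using a r p by (simp add: dFent_def powr_mult diff_divide_distrib algebra_simps)
  moreover have "b powr p - a powr p = a powr p * (r powr p - 1)"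
    unfolding b_eq using a r by (simp add: powr_mult algebra_simps)
  moreover have "E * \<alpha> * k * (Wa * A * (Y - 1)) * (B * (1 - X) / (p - 1))
      = - (E * k * Wa * (A * B) * (\<alpha> / (p - 1) * (X - 1) * (Y - 1)))" for E Wa A B X Y
    using p by (simp add: field_simps)
  ultimately show ?thesis
    unfolding reaction_term_def r_def[symmetric] Phi_eq by simp
qed

lemma reaction_term_le_subcritical:
  fixes p \<alpha> k t L W a b :: real
  assumes p: "0 < p" "p < 1" and \<alpha>: "2 * p \<le> \<alpha>" and k: "k > 0" and W: "W > 0"
    and a: "a > 0" and b: "b > 0"
  shows "reaction_term p \<alpha> k t L W a b \<le> exp (- t) * Mhat p \<alpha> * L\<^sup>2 * a powr (1 + p - \<alpha>) / (k * W powr \<alpha>)"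
proof (cases "a = b")
  case True
  then show ?thesis
    using Mhat_nonneg[OF p \<alpha>] k W a by (simp add: reaction_term_def)
next
  case False
  define z where "z = (b / a) powr p - 1"
  have z: "z > -1" "z \<noteq> 0"
    using a b p False by (auto simp: z_def)
  define m where "m = exp t * k * W powr \<alpha> * (a powr \<alpha> * a powr (p - 1)) * Phi p \<alpha> z"
  define X where "X = \<alpha> / p * L * (a powr p * z)"
  have m: "m > 0"
    unfolding m_def using k W a Phi_pos[OF p \<alpha> z] by simp
  have "a powr (1 + p - \<alpha>) = a powr ((p + p) - (\<alpha> + (p - 1)))"
    by (simp add: algebra_simps)
  then have a_powr: "a powr (1 + p - \<alpha>) = a powr p * a powr p / (a powr \<alpha> * a powr (p - 1))"
    by (simp only: powr_diff powr_add)
  have "reaction_term p \<alpha> k t L W a b = X - m"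
    using reaction_term_eq_Phi[OF _ _ W a b] p by (simp add: X_def m_def z_def)
  also have "\<dots> \<le> X\<^sup>2 / (4 * m)"
    using mult_le_square_plus[OF m, of X 1] by simp
  also have "\<dots> = exp (- t) * L\<^sup>2 * a powr (1 + p - \<alpha>) / (k * W powr \<alpha>)
        * (\<alpha>\<^sup>2 / (4 * p\<^sup>2) * z\<^sup>2 / Phi p \<alpha> z)"
    unfolding X_def m_def a_powr using p k W a Phi_pos[OF p \<alpha> z]
    by (simp add: exp_minus field_simps power2_eq_square)
  also have "\<dots> \<le> exp (- t) * L\<^sup>2 * a powr (1 + p - \<alpha>) / (k * W powr \<alpha>) * Mhat p \<alpha>"
    using Mhat_ge[OF p \<alpha> z] k W a by (intro mult_left_mono) auto
  finally show ?thesis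
    by (simp add: mult.commute mult.left_commute)
qed

lemma reaction_term_le_entropy_subcritical:
  fixes p \<alpha> k t L W a b Li :: real
  assumes p: "0 < p" "p < 1" and \<alpha>: "\<alpha> - 1 \<le> p" "2 * p \<le> \<alpha>" and k: "k > 0" and W: "W > 0"
    and a: "a > 0" and b: "b > 0" and Li: "L\<^sup>2 / W powr (\<alpha> + 1) \<le> Li"
  shows "reaction_term p \<alpha> k t L W a b
    \<le> 1 / k * Mhat p \<alpha> * (sqrt (1 + p - \<alpha>) * Fstar p (sqrt (1 + p - \<alpha>)) + 1) * exp (- t) * (L\<^sup>2 / W powr \<alpha>)
      + sqrt (1 + p - \<alpha>) / k * Mhat p \<alpha> * Li * exp (- t) * (W * Fent p a + W * Fent p b)"
proof -
  define \<kappa> where "\<kappa> = sqrt (1 + p - \<alpha>)"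
  define c where "c = exp (- t) * Mhat p \<alpha> * L\<^sup>2 / (k * W powr \<alpha>)"
  have \<kappa>: "\<kappa> \<ge> 0"
    using \<alpha> by (simp add: \<kappa>_def)
  have c: "c \<ge> 0"
    using Mhat_nonneg[OF p \<alpha>(2)] k by (simp add: c_def)
  have Fent: "Fent p a \<ge> 0" "Fent p b \<ge> 0"
    using Fent_nonneg a b p by auto
  have "reaction_term p \<alpha> k t L W a b \<le> c * a powr (1 + p - \<alpha>)"
    using reaction_term_le_subcritical[OF p \<alpha>(2) k W a b] by (simp add: c_def)
  also have "\<dots> \<le> c * (\<kappa> * Fent p a + \<kappa> * Fstar p \<kappa> + 1)"
    using powr_le_Fent_Fstar[OF p \<alpha>(1) _ a] p \<alpha> c by (intro mult_left_mono) (auto simp: \<kappa>_def)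
  also have "\<dots> = exp (- t) * Mhat p \<alpha> * \<kappa> / k * (L\<^sup>2 / W powr (\<alpha> + 1)) * (W * Fent p a)
      + 1 / k * Mhat p \<alpha> * (\<kappa> * Fstar p \<kappa> + 1) * exp (- t) * (L\<^sup>2 / W powr \<alpha>)"
    using W k by (simp add: c_def powr_add field_simps)
  also have "\<dots> \<le> exp (- t) * Mhat p \<alpha> * \<kappa> / k * Li * (W * Fent p a + W * Fent p b)
      + 1 / k * Mhat p \<alpha> * (\<kappa> * Fstar p \<kappa> + 1) * exp (- t) * (L\<^sup>2 / W powr \<alpha>)"
    using Mhat_nonneg[OF p \<alpha>(2)] \<kappa> k W Fent Li order_trans[OF _ Li]
    by (intro add_right_mono mult_left_mono mult_mono) auto
  finally show ?thesis
    by (simp add: \<kappa>_def algebra_simps)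
qed

lemma abs_le_Linf:
  fixes f :: "real \<Rightarrow> real"
  assumes "bounded (range f)"
  shows "\<bar>f y\<bar> \<le> Linf f"
proof -
  have "bdd_above (range (\<lambda>y. \<bar>f y\<bar>))"
    using assms unfolding bounded_real bdd_above_def by auto
  then show ?thesis
    unfolding Linf_def by (rule cSUP_upper[rotated]) auto
qed

lemma sim_profile_components_eq:
  assumes "sim_profile d1 d2 \<alpha> \<alpha> Am Ap U V \<Lambda>" and "\<alpha> > 0"
  shows "V = U"
proof
  fix y
  have "U y > 0" "V y > 0" "U y powr \<alpha> = V y powr \<alpha>"
    using assms(1) unfolding sim_profile_def by auto
  then have "(U y powr \<alpha>) powr (1 / \<alpha>) = (V y powr \<alpha>) powr (1 / \<alpha>)"
    by simp
  then show "V y = U y"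
    using \<open>U y > 0\<close> \<open>V y > 0\<close> assms(2) by (simp add: powr_powr)
qed

lemma entropy_flux_profile_has_real_derivative:
  fixes d1 d2 k \<alpha> Am Ap p t y :: real
    and U \<Lambda> :: "real \<Rightarrow> real"
    and u v :: "real \<Rightarrow> real \<Rightarrow> real"
  assumes p: "p > 0" and t: "t > 0"
    and profile: "sim_profile d1 d2 \<alpha> \<alpha> Am Ap U U \<Lambda>"
    and solution: "scaled_solution d1 d2 k \<alpha> \<alpha> Am Ap u v"
  shows "(entropy_flux p d1 U (u t) has_real_derivative entropy_flux_deriv p d1 \<alpha> U \<Lambda> (u t) y) (at y)"
    and "(entropy_flux p d2 U (v t) has_real_derivative entropy_flux_deriv p d2 (- \<alpha>) U \<Lambda> (v t) y) (at y)"
proof -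
  note sp = profile[unfolded sim_profile_def]
  note ss = solution[unfolded scaled_solution_def]
  have Upos: "\<And>y. U y > 0" and upos: "\<And>y. u t y > 0" and vpos: "\<And>y. v t y > 0"
    using sp ss t by auto
  have Ud: "\<And>y. U differentiable at y" "\<And>y. deriv U differentiable at y"
    using sp by auto
  have ud: "\<And>y. u t differentiable at y" "\<And>y. deriv (u t) differentiable at y"
    and vd: "\<And>y. v t differentiable at y" "\<And>y. deriv (v t) differentiable at y"
    using ss t by auto
  have "d1 * deriv (deriv U) y + y / 2 * deriv U y + \<alpha> * \<Lambda> y = 0"
    and "d2 * deriv (deriv U) y + y / 2 * deriv U y - \<alpha> * \<Lambda> y = 0" for y
    using sp by blast+
  then have U_eq: "\<alpha> * \<Lambda> y = - (d1 * deriv (deriv U) y + y / 2 * deriv U y)"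
    and V_eq: "(- \<alpha>) * \<Lambda> y = - (d2 * deriv (deriv U) y + y / 2 * deriv U y)" for y
    by (simp_all add: eq_neg_iff_add_eq_0 algebra_simps)
  show "(entropy_flux p d1 U (u t) has_real_derivative entropy_flux_deriv p d1 \<alpha> U \<Lambda> (u t) y) (at y)"
    by (rule entropy_flux_has_real_derivative[OF upos Upos ud Ud U_eq p])
  show "(entropy_flux p d2 U (v t) has_real_derivative entropy_flux_deriv p d2 (- \<alpha>) U \<Lambda> (v t) y) (at y)"
    by (rule entropy_flux_has_real_derivative[OF vpos Upos vd Ud V_eq p])
qed

lemma dissipation_integrand_le:
  fixes d1 d2 k \<alpha> p t y :: real
    and U \<Lambda> :: "real \<Rightarrow> real"
    and u v :: "real \<Rightarrow> real \<Rightarrow> real"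
  assumes d: "d1 \<ge> 0" "d2 \<ge> 0" and U: "U y > 0"
    and u_eq: "dtau u t y = d1 * dyy u t y + y / 2 * dy u t y
      + exp t * \<alpha> * k * (v t y powr \<alpha> - u t y powr \<alpha>)"
    and v_eq: "dtau v t y = d2 * dyy v t y + y / 2 * dy v t y
      - exp t * \<alpha> * k * (v t y powr \<alpha> - u t y powr \<alpha>)"
  shows "dFent p (rdens u U t y) * dtau u t y + dFent p (rdens v U t y) * dtau v t y
    \<le> entropy_flux_deriv p d1 \<alpha> U \<Lambda> (u t) y + entropy_flux_deriv p d2 (- \<alpha>) U \<Lambda> (v t) y
      - 1 / 2 * entropy_density p U U u v t y
      + reaction_term p \<alpha> k t (\<Lambda> y) (U y) (u t y / U y) (v t y / U y)"
proof -
  define a where "a = u t y / U y"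
  define b where "b = v t y / U y"
  have ua: "u t y = U y * a" and vb: "v t y = U y * b"
    using U by (auto simp: a_def b_def)
  have "0 \<le> d1 * ddFent p a * U y * (deriv (\<lambda>y. u t y / U y) y)\<^sup>2"
    "0 \<le> d2 * ddFent p b * U y * (deriv (\<lambda>y. v t y / U y) y)\<^sup>2"
    using d U by (simp_all add: ddFent_def)
  moreover have "dFent p (rdens u U t y) * dtau u t y + dFent p (rdens v U t y) * dtau v t y
      = dFent p a * (d1 * deriv (deriv (u t)) y + y / 2 * deriv (u t) y)
        + dFent p b * (d2 * deriv (deriv (v t)) y + y / 2 * deriv (v t) y)
        + exp t * \<alpha> * k * ((U y * b) powr \<alpha> - (U y * a) powr \<alpha>) * (dFent p a - dFent p b)"
    unfolding u_eq v_eq rdens_def dyy_def dy_def a_def[symmetric] b_def[symmetric] ua vb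
    using U by (simp add: algebra_simps)
  ultimately show ?thesis
    unfolding entropy_flux_deriv_def entropy_density_def reaction_term_def rdens_def
      a_def[symmetric] b_def[symmetric]
    by (simp add: algebra_simps diff_divide_distrib)
qed

context
  fixes d1 d2 k \<alpha> Am Ap p t :: real
    and U V \<Lambda> :: "real \<Rightarrow> real"
    and u v :: "real \<Rightarrow> real \<Rightarrow> real"
  assumes d: "d1 > 0" "d2 > 0" and \<alpha>: "\<alpha> > 0" and p: "p > 0" and t: "t > 0" and k: "k > 0"
    and profile: "sim_profile d1 d2 \<alpha> \<alpha> Am Ap U V \<Lambda>"
    and solution: "scaled_solution d1 d2 k \<alpha> \<alpha> Am Ap u v"
    and regular: "entropy_regular p d1 d2 \<alpha> \<alpha> U V \<Lambda> u v"
    and Lf_integrable: "(\<lambda>y. \<Lambda> y ^ 2 / U y powr \<alpha>) integrable_on UNIV"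
begin

lemma relent_deriv_le:
  fixes K1 K2 :: real
  assumes reaction_bound: "\<And>y. reaction_term p \<alpha> k t (\<Lambda> y) (U y) (u t y / U y) (v t y / U y)
      \<le> K2 * (\<Lambda> y ^ 2 / U y powr \<alpha>) + (1 / 2 - K1) * entropy_density p U V u v t y"
  shows "deriv (relent p U V u v) t
    \<le> - K1 * relent p U V u v t + K2 * integral UNIV (\<lambda>y. \<Lambda> y ^ 2 / U y powr \<alpha>)"
proof -
  have VU: "V = U"
    using sim_profile_components_eq[OF profile \<alpha>] .
  note er = regular[unfolded entropy_regular_def VU]
  note flux = entropy_flux_profile_has_real_derivative[OF p t profile[unfolded VU] solution]
  define e where "e = entropy_density p U U u v t"
  define D where "D = (\<lambda>y. dFent p (rdens u U t y) * dtau u t y + dFent p (rdens v U t y) * dtau v t y)"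
  define H where "H = (\<lambda>y. entropy_flux p d1 U (u t) y + entropy_flux p d2 U (v t) y)"
  define H' where "H' = (\<lambda>y. entropy_flux_deriv p d1 \<alpha> U \<Lambda> (u t) y + entropy_flux_deriv p d2 (- \<alpha>) U \<Lambda> (v t) y)"
  have cu: "component_regular p d1 U \<Lambda> u t" and cv: "component_regular p d2 U \<Lambda> v t"
    using er t by blast+
  have Upos: "\<And>y. U y > 0"
    using profile unfolding sim_profile_def by blast
  have u_eq: "\<And>y. dtau u t y = d1 * dyy u t y + y / 2 * dy u t y
      + exp t * \<alpha> * k * (v t y powr \<alpha> - u t y powr \<alpha>)"
    and v_eq: "\<And>y. dtau v t y = d2 * dyy v t y + y / 2 * dy v t y
      - exp t * \<alpha> * k * (v t y powr \<alpha> - u t y powr \<alpha>)"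
    using solution t unfolding scaled_solution_def by blast+
  have "integral UNIV D \<le> - K1 * integral UNIV e + K2 * integral UNIV (\<lambda>y. \<Lambda> y ^ 2 / U y powr \<alpha>)"
  proof (rule integral_le_of_derivative_bound[where H = H and H' = H'])
    show "D y \<le> H' y - K1 * e y + K2 * (\<Lambda> y ^ 2 / U y powr \<alpha>)" for y
      using dissipation_integrand_le[where U = U and y = y and \<Lambda> = \<Lambda> and p = p,
          OF less_imp_le[OF d(1)] less_imp_le[OF d(2)] Upos u_eq v_eq] reaction_bound[of y]
      unfolding D_def H'_def e_def VU left_diff_distrib by linarith
    show "(H has_real_derivative H' y) (at y)" for y
      unfolding H_def H'_def using flux by (rule DERIV_add)
    show "(H \<longlongrightarrow> 0) at_top" "(H \<longlongrightarrow> 0) at_bot"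
      unfolding H_def using entropy_flux_tendsto_zero[OF cu] entropy_flux_tendsto_zero[OF cv]
      by (auto intro: tendsto_add_zero)
  qed (use er t Lf_integrable in \<open>auto simp: D_def e_def\<close>)
  moreover have "deriv (relent p U V u v) t = integral UNIV D"
    using er t by (intro DERIV_imp_deriv) (auto simp: D_def VU)
  ultimately show ?thesis
    by (simp add: relent_def e_def VU)
qed


lemma relative_densities_pos: "u t y / U y > 0" "v t y / U y > 0"
  using profile solution t unfolding sim_profile_def scaled_solution_def by auto

lemma relent_deriv_le_critical:
  assumes "\<alpha> = p + 1"
  shows "deriv (relent p U V u v) t
    \<le> - (1 / 2) * relent p U V u v t
      + exp (- t) / (4 * k) * integral UNIV (\<lambda>y. \<Lambda> y ^ 2 / U y powr \<alpha>)"
proof (rule relent_deriv_le)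
  have "U y > 0" for y
    using profile unfolding sim_profile_def by blast
  then show "reaction_term p \<alpha> k t (\<Lambda> y) (U y) (u t y / U y) (v t y / U y)
      \<le> exp (- t) / (4 * k) * (\<Lambda> y ^ 2 / U y powr \<alpha>) + (1 / 2 - 1 / 2) * entropy_density p U V u v t y" for y
    using reaction_term_le_critical[OF assms p k _ relative_densities_pos] by simp
qed

lemma relent_deriv_le_subcritical:
  assumes p_lt: "p < 1" and \<alpha>_bounds: "\<alpha> - 1 \<le> p" "2 * p \<le> \<alpha>"
    and bounded: "bounded (range (\<lambda>y. \<Lambda> y ^ 2 / U y powr (\<alpha> + 1)))"
  defines "\<kappa> \<equiv> sqrt (1 + p - \<alpha>)" and "Li \<equiv> Linf (\<lambda>y. \<Lambda> y ^ 2 / U y powr (\<alpha> + 1))"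
  shows "deriv (relent p U V u v) t
    \<le> - (1 / 2 - \<kappa> / k * Mhat p \<alpha> * Li * exp (- t)) * relent p U V u v t
      + (1 / k * Mhat p \<alpha> * (\<kappa> * Fstar p \<kappa> + 1) * exp (- t))
        * integral UNIV (\<lambda>y. \<Lambda> y ^ 2 / U y powr \<alpha>)"
proof (rule relent_deriv_le)
  have "U y > 0" and "\<Lambda> y ^ 2 / U y powr (\<alpha> + 1) \<le> Li" for y
    using profile abs_le_Linf[OF bounded, of y] unfolding sim_profile_def Li_def by auto
  then show "reaction_term p \<alpha> k t (\<Lambda> y) (U y) (u t y / U y) (v t y / U y)
      \<le> 1 / k * Mhat p \<alpha> * (\<kappa> * Fstar p \<kappa> + 1) * exp (- t) * (\<Lambda> y ^ 2 / U y powr \<alpha>)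
        + (1 / 2 - (1 / 2 - \<kappa> / k * Mhat p \<alpha> * Li * exp (- t))) * entropy_density p U V u v t y" for y
    using reaction_term_le_entropy_subcritical[OF p p_lt \<alpha>_bounds k _ relative_densities_pos]
      sim_profile_components_eq[OF profile \<alpha>]
    by (simp add: \<kappa>_def entropy_density_def rdens_def)
qed

end

theorem mainTheorem13:
  fixes d1 d2 k \<alpha> \<beta> Am Ap p t :: real
    and U V \<Lambda> :: "real \<Rightarrow> real"
    and u v :: "real \<Rightarrow> real \<Rightarrow> real"
  assumes "d1 > 0" and "d2 > 0" and "k > 0"
    and "\<alpha> \<ge> 1" and "\<beta> = \<alpha>"
    and "Am > 0" and "Ap > 0"
    and "p > 0" and "\<alpha> - 1 \<le> p" and "p \<le> max (\<alpha> / 2) (\<alpha> - 1)"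
    and "sim_profile d1 d2 \<alpha> \<beta> Am Ap U V \<Lambda>"
    and "scaled_solution d1 d2 k \<alpha> \<beta> Am Ap u v"
    and "entropy_regular p d1 d2 \<alpha> \<beta> U V \<Lambda> u v"
    and "(\<lambda>y. \<Lambda> y ^ 2 / U y powr \<alpha>) integrable_on UNIV"
    and "bounded (range (\<lambda>y. \<Lambda> y ^ 2 / U y powr (\<alpha> + 1)))"
    and "t > 0"
  shows
    "(2 \<le> \<alpha> \<and> \<alpha> = p + 1 \<longrightarrow>
        deriv (relent p U V u v) t
          \<le> - (1 / 2 - 0 * exp (- t)) * relent p U V u v t
            + (1 / (4 * k)) * integral UNIV (\<lambda>y. \<Lambda> y ^ 2 / U y powr \<alpha>) * exp (- t)) \<and>
     (1 \<le> \<alpha> \<and> \<alpha> < 2 \<longrightarrow>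
        deriv (relent p U V u v) t
          \<le> - (1 / 2 - (sqrt (1 + p - \<alpha>) / k) * Mhat p \<alpha>
                         * Linf (\<lambda>y. \<Lambda> y ^ 2 / U y powr (\<alpha> + 1)) * exp (- t))
              * relent p U V u v t
            + (1 / k) * Mhat p \<alpha> * (sqrt (1 + p - \<alpha>) * Fstar p (sqrt (1 + p - \<alpha>)) + 1)
              * integral UNIV (\<lambda>y. \<Lambda> y ^ 2 / U y powr \<alpha>) * exp (- t))"
proof -
  note A = assms[unfolded \<open>\<beta> = \<alpha>\<close>]
  have \<alpha>: "\<alpha> > 0"
    using A(4) by simp
  note setting = A(1,2) \<alpha> A(8,16,3,11,12,13,14)
  have "\<alpha> < 2 \<Longrightarrow> p < 1 \<and> 2 * p \<le> \<alpha>"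
    using A(10) by (auto simp: max_def split: if_splits)
  then show ?thesis
    using relent_deriv_le_critical[OF setting] relent_deriv_le_subcritical[OF setting _ A(9) _ A(15)]
    by (auto simp: algebra_simps)
qed

end
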